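(* Let $G$ be a complete $t$-partite graph with $t\ge2$ parts, at least one of which has size greater than $1$. If $G$ is $\mathcal{C}$-$\mathrm{MH}$, then $t=2$.
   Context: Subgraphs are induced. A homomorphism maps edges to edges; a monomorphism is an injective homomorphism. A graph $G$ is $\mathcal{C}$-$\mathrm{MH}$ if every monomorphism from a finite connected induced subgraph of $G$ into $G$ extends to a homomorphism $G\to G$. *)

theory Defs
  imports Main
begin

text \<open>A graph is a vertex set V together with an adjacency relation E.
  Subgraphs are induced: the induced subgraph on S has vertex set S and edges E restricted to S.\<close>

definition graph_hom :: "'a set \<Rightarrow> ('a \<Rightarrow> 'a \<Rightarrow> bool) \<Rightarrow> 'b set \<Rightarrow> ('b \<Rightarrow> 'b \<Rightarrow> bool) \<Rightarrow> ('a \<Rightarrow> 'b) \<Rightarrow> bool" where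
  "graph_hom V E W F f \<longleftrightarrow> f ` V \<subseteq> W \<and> (\<forall>x\<in>V. \<forall>y\<in>V. E x y \<longrightarrow> F (f x) (f y))"

definition graph_mono :: "'a set \<Rightarrow> ('a \<Rightarrow> 'a \<Rightarrow> bool) \<Rightarrow> 'b set \<Rightarrow> ('b \<Rightarrow> 'b \<Rightarrow> bool) \<Rightarrow> ('a \<Rightarrow> 'b) \<Rightarrow> bool" where
  "graph_mono V E W F f \<longleftrightarrow> graph_hom V E W F f \<and> inj_on f V"

definition connected_induced :: "('a \<Rightarrow> 'a \<Rightarrow> bool) \<Rightarrow> 'a set \<Rightarrow> bool" where
  "connected_induced E S \<longleftrightarrow> S \<noteq> {} \<and>
     (\<forall>x\<in>S. \<forall>y\<in>S. (\<lambda>u v. u \<in> S \<and> v \<in> S \<and> E u v)\<^sup>*\<^sup>* x y)"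

definition C_MH :: "'a set \<Rightarrow> ('a \<Rightarrow> 'a \<Rightarrow> bool) \<Rightarrow> bool" where
  "C_MH V E \<longleftrightarrow> (\<forall>S f. S \<subseteq> V \<longrightarrow> finite S \<longrightarrow> connected_induced E S \<longrightarrow>
      graph_mono S E V E f \<longrightarrow> (\<exists>g. graph_hom V E V E g \<and> (\<forall>x\<in>S. g x = f x)))"

text \<open>(V,E) is the complete t-partite graph whose parts are the (nonempty) fibres of p over {0..<t}.\<close>
definition complete_multipartite :: "'a set \<Rightarrow> ('a \<Rightarrow> 'a \<Rightarrow> bool) \<Rightarrow> ('a \<Rightarrow> nat) \<Rightarrow> nat \<Rightarrow> bool" where
  "complete_multipartite V E p t \<longleftrightarrow> p ` V = {..<t} \<and>
     (\<forall>x y. E x y \<longleftrightarrow> x \<in> V \<and> y \<in> V \<and> p x \<noteq> p y)"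

end

theory Submission
  imports Defs
begin

text \<open>An endomorphism g of a complete multipartite graph with finitely many parts induces an
  injective, hence bijective, map on the parts. So the part of g v is the image of some part,
  and that part must be the one of v: any other part contains a vertex adjacent to v whose
  image would then lie in the same part as g v, yet be adjacent to it. Consequently g maps
  each part into a single part. In a complete t-partite graph with t \<ge> 3 and a part holding
  two vertices x, y, pick z in a second part and w in a third one: the map fixing x, z and
  sending y to w is a monomorphism of the path x z y, but no endomorphism extends it.\<close>

lemma complete_multipartite_section:
  assumes "complete_multipartite V E p t" and "u \<in> V"
  obtains r where "\<And>i. i < t \<Longrightarrow> r i \<in> V \<and> p (r i) = i" and "r (p u) = u"
proof
  have parts: "p ` V = {..<t}"
    using assms(1) unfolding complete_multipartite_def by simp
  define r where "r i = (if i = p u then u else SOME w. w \<in> V \<and> p w = i)" for i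
  show "r i \<in> V \<and> p (r i) = i" if "i < t" for i
  proof (cases "i = p u")
    case False
    have "\<exists>w. w \<in> V \<and> p w = i" using that parts by (metis imageE lessThan_iff)
    from someI_ex[OF this] show ?thesis using False by (simp add: r_def)
  qed (use assms(2) r_def in simp)
  show "r (p u) = u" by (simp add: r_def)
qed

lemma complete_multipartite_hom_same_part:
  assumes cm: "complete_multipartite V E p t"
    and g: "graph_hom V E V E g"
    and u: "u \<in> V" and v: "v \<in> V" and uv: "p u = p v"
  shows "p (g u) = p (g v)"
proof -
  have parts: "p ` V = {..<t}" and adj: "\<And>x y. E x y \<longleftrightarrow> x \<in> V \<and> y \<in> V \<and> p x \<noteq> p y"
    using cm unfolding complete_multipartite_def by auto
  have gV: "\<And>x. x \<in> V \<Longrightarrow> g x \<in> V"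
    and gE: "\<And>x y. x \<in> V \<Longrightarrow> y \<in> V \<Longrightarrow> E x y \<Longrightarrow> E (g x) (g y)"
    using g unfolding graph_hom_def by auto
  obtain r where r: "\<And>i. i < t \<Longrightarrow> r i \<in> V \<and> p (r i) = i" and ru: "r (p u) = u"
    using complete_multipartite_section[OF cm u] by blast
  define h where "h i = p (g (r i))" for i
  have "inj_on h {..<t}"
  proof (rule inj_onI)
    fix i j assume i: "i \<in> {..<t}" and j: "j \<in> {..<t}" and hij: "h i = h j"
    show "i = j"
    proof (rule ccontr)
      assume "i \<noteq> j"
      then have "E (r i) (r j)" using r i j adj by auto
      then have "E (g (r i)) (g (r j))" using r i j gE by auto
      then show False using hij adj unfolding h_def by auto
    qed
  qed
  moreover have "h ` {..<t} \<subseteq> {..<t}" using r gV parts unfolding h_def by auto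
  ultimately have h_onto: "h ` {..<t} = {..<t}" by (simp add: endo_inj_surj)
  have "p (g v) \<in> {..<t}" using gV v parts by auto
  then obtain i where i: "i < t" and hi: "h i = p (g v)" using h_onto by (metis imageE lessThan_iff)
  have "i = p u"
  proof (rule ccontr)
    assume "i \<noteq> p u"
    then have "E (g (r i)) (g v)" using r[OF i] v uv adj gE by auto
    then show False using hi adj unfolding h_def by auto
  qed
  then show ?thesis using hi ru unfolding h_def by simp
qed

lemma connected_induced_star:
  assumes "z \<in> S" and "\<And>q. q \<in> S \<Longrightarrow> q \<noteq> z \<Longrightarrow> E q z \<and> E z q"
  shows "connected_induced E S"
  unfolding connected_induced_def
proof (intro conjI ballI)
  let ?R = "\<lambda>u v. u \<in> S \<and> v \<in> S \<and> E u v"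
  have to_centre: "?R\<^sup>*\<^sup>* q z" and from_centre: "?R\<^sup>*\<^sup>* z q" if "q \<in> S" for q
    using assms that by (cases "q = z"; auto)+
  show "?R\<^sup>*\<^sup>* u v" if "u \<in> S" "v \<in> S" for u v
    using rtranclp_trans[OF to_centre from_centre] that .
qed (use assms(1) in blast)

lemma ex_less_avoiding_two:
  fixes t a b :: nat
  assumes "2 < t"
  shows "\<exists>i<t. i \<noteq> a \<and> i \<noteq> b"
proof -
  have "\<exists>i\<in>{0, 1, 2::nat}. i \<noteq> a \<and> i \<noteq> b" by auto
  then obtain i where "i \<in> {0, 1, 2}" "i \<noteq> a" "i \<noteq> b" by blast
  moreover from assms \<open>i \<in> {0, 1, 2}\<close> have "i < t" by auto
  ultimately show ?thesis by blast
qed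

theorem lemma7p2:
  fixes V :: "'a set" and E :: "'a \<Rightarrow> 'a \<Rightarrow> bool" and p :: "'a \<Rightarrow> nat" and t :: nat
  assumes "complete_multipartite V E p t"
    and "t \<ge> 2"
    and "\<exists>x\<in>V. \<exists>y\<in>V. x \<noteq> y \<and> p x = p y"
    and "C_MH V E"
  shows "t = 2"
proof (rule ccontr)
  assume "t \<noteq> 2"
  with assms(2) have "2 < t" by simp
  have parts: "p ` V = {..<t}" and adj: "\<And>x y. E x y \<longleftrightarrow> x \<in> V \<and> y \<in> V \<and> p x \<noteq> p y"
    using assms(1) unfolding complete_multipartite_def by auto
  then have part_nonempty: "\<exists>v\<in>V. p v = i" if "i < t" for i
    using that by (metis imageE lessThan_iff)
  obtain x y where x: "x \<in> V" and y: "y \<in> V" and xy: "x \<noteq> y" "p x = p y"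
    using assms(3) by blast
  obtain z where z: "z \<in> V" "p z \<noteq> p x"
    using ex_less_avoiding_two[OF \<open>2 < t\<close>, of "p x" "p x"] part_nonempty by blast
  obtain w where w: "w \<in> V" "p w \<noteq> p x" "p w \<noteq> p z"
    using ex_less_avoiding_two[OF \<open>2 < t\<close>, of "p x" "p z"] part_nonempty by blast
  define S where "S = {x, z, y}"
  define f where "f v = (if v = y then w else v)" for v
  have "connected_induced E S"
    by (rule connected_induced_star[of z]) (use x y z xy adj in \<open>auto simp: S_def\<close>)
  moreover have "graph_mono S E V E f"
    using x y z w xy adj unfolding graph_mono_def graph_hom_def inj_on_def S_def f_def by auto
  moreover have "S \<subseteq> V" "finite S" using x y z by (auto simp: S_def)
  ultimately obtain g where g: "graph_hom V E V E g" and gf: "\<forall>v\<in>S. g v = f v"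
    using assms(4) unfolding C_MH_def by blast
  have "g x = x" "g y = w" using gf xy by (auto simp: S_def f_def)
  with complete_multipartite_hom_same_part[OF assms(1) g x y xy(2)] w show False by simp
qed

end
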